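(* Let $V$ be a $5$-dimensional complex vector space, $G=G(2,V)\subset P(\Lambda^2V)$ Plücker-embedded, $H_1,H_2\subset\Lambda^2V$ hyperplanes, $V_8=H_1\cap H_2$, with $G_4=G\cap P(V_8)$ smooth, and let $\Omega\subset P(V_8)$ be a quadric such that the threefold $X=G_4\cap\Omega$ is smooth everywhere except at one point $t$, which is an ordinary double point. Then there exists a quadric cone $\Omega'\subset P(V_8)$ with vertex $t$ such that $X=G_4\cap\Omega'$. *)

theory Defs
  imports "HOL-Analysis.Analysis" "HOL-Library.Numeral_Type"
begin

text \<open>V = C^5 with basis indexed by the type 5.  The ambient space of Lambda^2 V is
  modelled inside complex^(5 x 5); Lambda^2 V itself is the subspace of skew-symmetric
  elements (x $ (i,j) is the Pluecker coordinate p_ij).  All linear algebra is over the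
  complex numbers (vec.span, vec.subspace, vec.dim use complex scalar multiplication).\<close>

type_synonym L2 = "complex ^ (5 \<times> 5)"

definition Lam2 :: "L2 set" where
  "Lam2 = {x. \<forall>i j. x $ (i, j) = - x $ (j, i)}"

definition hyperplane_Lam2 :: "L2 set \<Rightarrow> bool" where
  "hyperplane_Lam2 H \<longleftrightarrow> vec.subspace H \<and> H \<subseteq> Lam2 \<and> vec.dim H = 9"

text \<open>Quadruples i<j<k<l indexing the Pluecker quadrics (4x4 Pfaffians).\<close>
definition quadr4 :: "(5 \<times> 5 \<times> 5 \<times> 5) set" where
  "quadr4 = {(i, j, k, l). i < j \<and> j < k \<and> k < l}"

fun pf :: "5 \<times> 5 \<times> 5 \<times> 5 \<Rightarrow> L2 \<Rightarrow> complex" where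
  "pf (i, j, k, l) x = x $ (i, j) * x $ (k, l) - x $ (i, k) * x $ (j, l) + x $ (i, l) * x $ (j, k)"

text \<open>Homogeneous quadratic forms on the ambient space (a quadric in P(S) is given by
  such a form not vanishing identically on S).\<close>
definition is_quadratic_form :: "(L2 \<Rightarrow> complex) \<Rightarrow> bool" where
  "is_quadratic_form q \<longleftrightarrow> (\<exists>M. \<forall>x. q x = (\<Sum>a\<in>UNIV. \<Sum>b\<in>UNIV. M a b * x $ a * x $ b))"

text \<open>Differential at x, applied to w, of a quadratic form f (for a homogeneous quadratic
  polynomial this is exactly f(x+w) - f(x) - f(w), i.e. twice the polar form).\<close>
definition dq :: "(L2 \<Rightarrow> complex) \<Rightarrow> L2 \<Rightarrow> L2 \<Rightarrow> complex" where
  "dq f x w = f (x + w) - f x - f w"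

text \<open>Affine cone over G(2,V) \<inter> P(S), cut out by the Pluecker quadrics.\<close>
definition pl_cone :: "L2 set \<Rightarrow> L2 set" where
  "pl_cone S = {x \<in> S. \<forall>k\<in>quadr4. pf k x = 0}"

text \<open>Zariski tangent space (affine cone version) at x of G(2,V) \<inter> P(S).\<close>
definition tangent_G :: "L2 set \<Rightarrow> L2 \<Rightarrow> L2 set" where
  "tangent_G S x = {w \<in> S. \<forall>k\<in>quadr4. dq (pf k) x w = 0}"

text \<open>Affine cone over X = G(2,V) \<inter> P(S) \<inter> {q = 0} and its Zariski tangent space.\<close>
definition X_cone :: "L2 set \<Rightarrow> (L2 \<Rightarrow> complex) \<Rightarrow> L2 set" where
  "X_cone S q = {x \<in> pl_cone S. q x = 0}"

definition tangent_X :: "L2 set \<Rightarrow> (L2 \<Rightarrow> complex) \<Rightarrow> L2 \<Rightarrow> L2 set" where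
  "tangent_X S q x = {w \<in> tangent_G S x. dq q x w = 0}"

text \<open>Ordinary double point of X at [t] (X a hypersurface section q=0 of the smooth
  variety G(2,V) \<inter> P(S)): q restricted to the cone M over G \<inter> P(S) is critical at t
  (Lagrange multipliers lam), and the Hessian of q|M at t, namely the polar form of
  q - \<Sum> lam_k pf_k restricted to T_t M, has kernel exactly the Euler line C t
  (i.e. the Hessian is nondegenerate transversally to the cone direction).\<close>
definition ordinary_double_point :: "L2 set \<Rightarrow> (L2 \<Rightarrow> complex) \<Rightarrow> L2 \<Rightarrow> bool" where
  "ordinary_double_point S q t \<longleftrightarrow>
     t \<in> X_cone S q \<and> t \<noteq> 0 \<and>
     (\<exists>lam :: 5 \<times> 5 \<times> 5 \<times> 5 \<Rightarrow> complex.
        (\<forall>w\<in>S. dq q t w = (\<Sum>k\<in>quadr4. lam k * dq (pf k) t w)) \<and>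
        vec.dim {u \<in> tangent_G S t. \<forall>w\<in>tangent_G S t.
                   dq (\<lambda>y. q y - (\<Sum>k\<in>quadr4. lam k * pf k y)) u w = 0} = 1)"

end

theory Submission
  imports Defs
begin

text \<open>The cone is the Lagrange-multiplier correction q' = q - \<Sum> lam_k pf_k supplied by the
  node condition.  It agrees with q on the cone over G(2,V), and criticality of q|G_4 at t says
  exactly that the differential of q' at t vanishes on V_8, so q' is a cone with vertex t.
  It is a genuine quadric on P(V_8): if q' vanished on V_8, its polar form would vanish on the
  5-dimensional tangent space T_t G_4, whereas the node condition makes its kernel there the
  line through t.\<close>

lemma is_quadratic_form_coord_mult: "is_quadratic_form (\<lambda>x. x $ a * x $ b)"
  unfolding is_quadratic_form_def
proof (intro exI allI)
  fix x :: L2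
  have "\<And>c d. (if c = a \<and> d = b then 1 else 0) * x $ c * x $ d
      = (if d = b then (if c = a then x $ a * x $ b else 0) else 0)" by auto
  then show "x $ a * x $ b = (\<Sum>c\<in>UNIV. \<Sum>d\<in>UNIV. (if c = a \<and> d = b then 1 else 0) * x $ c * x $ d)"
    by (simp add: sum.delta)
qed

lemma is_quadratic_form_add:
  assumes "is_quadratic_form f" and "is_quadratic_form g"
  shows "is_quadratic_form (\<lambda>x. f x + g x)"
proof -
  from assms obtain M N where "\<forall>x. f x = (\<Sum>a\<in>UNIV. \<Sum>b\<in>UNIV. M a b * x $ a * x $ b)"
    and "\<forall>x. g x = (\<Sum>a\<in>UNIV. \<Sum>b\<in>UNIV. N a b * x $ a * x $ b)"
    unfolding is_quadratic_form_def by blast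
  then show ?thesis unfolding is_quadratic_form_def
    by (intro exI[of _ "\<lambda>a b. M a b + N a b"]) (simp add: algebra_simps sum.distrib)
qed

lemma is_quadratic_form_diff:
  assumes "is_quadratic_form f" and "is_quadratic_form g"
  shows "is_quadratic_form (\<lambda>x. f x - g x)"
proof -
  from assms obtain M N where "\<forall>x. f x = (\<Sum>a\<in>UNIV. \<Sum>b\<in>UNIV. M a b * x $ a * x $ b)"
    and "\<forall>x. g x = (\<Sum>a\<in>UNIV. \<Sum>b\<in>UNIV. N a b * x $ a * x $ b)"
    unfolding is_quadratic_form_def by blast
  then show ?thesis unfolding is_quadratic_form_def
    by (intro exI[of _ "\<lambda>a b. M a b - N a b"]) (simp add: algebra_simps sum_subtractf)
qed

lemma is_quadratic_form_cmult:
  assumes "is_quadratic_form f"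
  shows "is_quadratic_form (\<lambda>x. c * f x)"
proof -
  from assms obtain M where "\<forall>x. f x = (\<Sum>a\<in>UNIV. \<Sum>b\<in>UNIV. M a b * x $ a * x $ b)"
    unfolding is_quadratic_form_def by blast
  then show ?thesis unfolding is_quadratic_form_def
    by (intro exI[of _ "\<lambda>a b. c * M a b"]) (simp add: algebra_simps sum_distrib_left)
qed

lemma is_quadratic_form_sum:
  assumes "finite A" and "\<And>k. k \<in> A \<Longrightarrow> is_quadratic_form (f k)"
  shows "is_quadratic_form (\<lambda>x. \<Sum>k\<in>A. f k x)"
  using assms
proof (induction A rule: finite_induct)
  case empty
  show ?case unfolding is_quadratic_form_def by (rule exI[of _ "\<lambda>a b. 0"]) simp
next
  case (insert a A)
  then show ?case by (simp add: is_quadratic_form_add)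
qed

lemma is_quadratic_form_pf: "is_quadratic_form (pf k)"
proof -
  obtain i j l m where k: "k = (i, j, l, m)" by (cases k)
  have "is_quadratic_form
      (\<lambda>x. x $ (i, j) * x $ (l, m) - x $ (i, l) * x $ (j, m) + x $ (i, m) * x $ (j, l))"
    by (intro is_quadratic_form_add is_quadratic_form_diff is_quadratic_form_coord_mult)
  then show ?thesis unfolding k by (simp add: pf.simps[abs_def])
qed

lemma dq_diff_sum_cmult:
  "dq (\<lambda>y. f y - (\<Sum>k\<in>A. c k * g k y)) x w = dq f x w - (\<Sum>k\<in>A. c k * dq (g k) x w)"
  unfolding dq_def by (simp add: algebra_simps sum_subtractf sum_distrib_left sum.distrib)

lemma dq_eq_0_if_vanishes_on_subspace:
  assumes "vec.subspace S" and "\<forall>x\<in>S. f x = 0" and "u \<in> S" and "w \<in> S"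
  shows "dq f u w = 0"
proof -
  have "u + w \<in> S" using assms vec.subspace_add by blast
  then show ?thesis using assms unfolding dq_def by simp
qed

lemma tangent_G_subset: "tangent_G S x \<subseteq> S"
  unfolding tangent_G_def by blast

theorem lemma5p7:
  fixes H1 H2 :: "L2 set" and q :: "L2 \<Rightarrow> complex" and t :: L2
  assumes hyp1: "hyperplane_Lam2 H1" and hyp2: "hyperplane_Lam2 H2" and distinct: "H1 \<noteq> H2"
    and G4_smooth: "\<forall>x\<in>pl_cone (H1 \<inter> H2). x \<noteq> 0 \<longrightarrow> vec.dim (tangent_G (H1 \<inter> H2) x) = 5"
    and quadric: "is_quadratic_form q" "\<exists>x\<in>H1 \<inter> H2. q x \<noteq> 0"
    and smooth_off_t: "\<forall>x\<in>X_cone (H1 \<inter> H2) q. x \<noteq> 0 \<and> x \<notin> vec.span {t}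
                          \<longrightarrow> vec.dim (tangent_X (H1 \<inter> H2) q x) = 4"
    and t_singular: "vec.dim (tangent_X (H1 \<inter> H2) q t) \<noteq> 4"
    and node: "ordinary_double_point (H1 \<inter> H2) q t"
  shows "\<exists>q'. is_quadratic_form q' \<and> (\<exists>x\<in>H1 \<inter> H2. q' x \<noteq> 0)
              \<and> (\<forall>w\<in>H1 \<inter> H2. dq q' t w = 0)
              \<and> (\<exists>c::complex. c \<noteq> 0 \<and> (\<forall>x\<in>pl_cone (H1 \<inter> H2). q' x = c * q x))"
proof -
  let ?S = "H1 \<inter> H2"
  from node obtain lam where t_cone: "t \<in> pl_cone ?S" and "t \<noteq> 0"
    and critical: "\<forall>w\<in>?S. dq q t w = (\<Sum>k\<in>quadr4. lam k * dq (pf k) t w)"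
    and hessian: "vec.dim {u \<in> tangent_G ?S t. \<forall>w\<in>tangent_G ?S t.
                   dq (\<lambda>y. q y - (\<Sum>k\<in>quadr4. lam k * pf k y)) u w = 0} = 1"
    unfolding ordinary_double_point_def X_cone_def by blast
  define q' where "q' = (\<lambda>y. q y - (\<Sum>k\<in>quadr4. lam k * pf k y))"
  have subspace: "vec.subspace ?S"
    using hyp1 hyp2 unfolding hyperplane_Lam2_def by (simp add: vec.subspace_inter)
  have "is_quadratic_form q'"
    unfolding q'_def
    by (intro is_quadratic_form_diff quadric(1) is_quadratic_form_sum is_quadratic_form_cmult
        is_quadratic_form_pf) simp
  moreover have "\<exists>x\<in>?S. q' x \<noteq> 0"
  proof (rule ccontr)
    assume "\<not> (\<exists>x\<in>?S. q' x \<noteq> 0)"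
    then have "{u \<in> tangent_G ?S t. \<forall>w\<in>tangent_G ?S t. dq q' u w = 0} = tangent_G ?S t"
      using dq_eq_0_if_vanishes_on_subspace[OF subspace] tangent_G_subset by blast
    moreover have "vec.dim (tangent_G ?S t) = 5" using G4_smooth t_cone \<open>t \<noteq> 0\<close> by blast
    ultimately show False using hessian unfolding q'_def by simp
  qed
  moreover have "\<forall>w\<in>?S. dq q' t w = 0"
    using critical unfolding q'_def dq_diff_sum_cmult by simp
  moreover have "\<forall>x\<in>pl_cone ?S. q' x = 1 * q x"
    unfolding q'_def pl_cone_def by simp
  ultimately show ?thesis by (intro exI[of _ q'] conjI exI[of _ 1]) auto
qed

end
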